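(* Let $k$ be a positive integer and let $G$ be a DPG-$[k,2]$-colorable graph. Then: (1) $G$ is DP-$k$-colorable, and thus $k$-choosable. (2) $G$ is DP-vertex-$\lceil k/2\rceil$-arborable. (3) Let $d$ be an integer with $2d>k$ and $d\le k$. If $L$ is a $d$-assignment of $G$ (colors being positive integers, so that $1,2,\dots,2d-k$ are colors), then $G$ has an $L$-forested-coloring such that $C(i)$ is an independent set for each $i\in\{1,\dots,2d-k\}$.
   Context: All graphs are finite, simple, undirected. An assignment $L$ gives each vertex $v$ a set $L(v)$ of colors (positive integers); $k$-assignment means $|L(v)|=k$; $G$ is $k$-choosable if every $k$-assignment admits a proper coloring from the lists. A cover $H$ of $G$ w.r.t. $L$ has vertex set $\{(u,c):c\in L(u)\}$, each $\{u\}\times L(u)$ is a clique, for each edge $uv$ the edges between $\{u\}\times L(u)$ and $\{v\}\times L(v)$ form a matching, and there are no such edges for non-adjacent $u,v$. A representative set contains exactly one vertex of each $\{v\}\times L(v)$. DP-coloring: representative $R$ with $H[R]$ edgeless; DP-$k$-colorable: exists for every $k$-assignment and cover. DP-forested-coloring: representative $R$ with $H[R]$ a forest; DP-vertex-$k$-arborable: exists for every $k$-assignment and cover. $L$-forested-coloring: $c(v)\in L(v)$ with every color class inducing a forest; $C(i)$ is the set of vertices colored $i$. For $F=(f_1,\dots,f_s)$, $f_i:V(G)\to\mathbb{Z}_{\ge0}$, $|f(v)|=\sum_i f_i(v)$; a DP-$F$-coloring of $(G,H)$ is a representative set $R$ admitting an ordering in which each $(v,i)\in R$ has fewer than $f_i(v)$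 $H$-neighbors among earlier elements of $R$. $G$ is DPG-$[k,t]$-colorable if for every $s\ge1$, every cover $H$ w.r.t. $L(v)=\{1,\dots,s\}$ for all $v$, and every $F$ with $|f(v)|\ge k$ and $f_i(v)\le t$ for all $v,i$, $(G,H)$ has a DP-$F$-coloring. *)

theory Defs
  imports Complex_Main
begin

definition graph :: "'v set \<Rightarrow> ('v \<Rightarrow> 'v \<Rightarrow> bool) \<Rightarrow> bool" where
  "graph V E \<longleftrightarrow> finite V \<and> (\<forall>u v. E u v \<longrightarrow> u \<in> V \<and> v \<in> V \<and> u \<noteq> v \<and> E v u)"

definition has_cycle_in :: "('a \<Rightarrow> 'a \<Rightarrow> bool) \<Rightarrow> 'a set \<Rightarrow> bool" where
  "has_cycle_in A S \<longleftrightarrow> (\<exists>xs. length xs \<ge> 3 \<and> distinct xs \<and> set xs \<subseteq> S \<and>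
      (\<forall>i < length xs. A (xs ! i) (xs ! ((i + 1) mod length xs))))"

definition forest_on :: "('a \<Rightarrow> 'a \<Rightarrow> bool) \<Rightarrow> 'a set \<Rightarrow> bool" where
  "forest_on A S \<longleftrightarrow> \<not> has_cycle_in A S"

definition independent_on :: "('a \<Rightarrow> 'a \<Rightarrow> bool) \<Rightarrow> 'a set \<Rightarrow> bool" where
  "independent_on A S \<longleftrightarrow> (\<forall>x\<in>S. \<forall>y\<in>S. \<not> A x y)"

definition k_assignment :: "'v set \<Rightarrow> nat \<Rightarrow> ('v \<Rightarrow> nat set) \<Rightarrow> bool" where
  "k_assignment V k L \<longleftrightarrow> (\<forall>v\<in>V. finite (L v) \<and> card (L v) = k \<and> 0 \<notin> L v)"

definition cover_verts :: "'v set \<Rightarrow> ('v \<Rightarrow> nat set) \<Rightarrow> ('v \<times> nat) set" where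
  "cover_verts V L = {(u, c). u \<in> V \<and> c \<in> L u}"

definition is_cover :: "'v set \<Rightarrow> ('v \<Rightarrow> 'v \<Rightarrow> bool) \<Rightarrow> ('v \<Rightarrow> nat set)
    \<Rightarrow> ('v \<times> nat \<Rightarrow> 'v \<times> nat \<Rightarrow> bool) \<Rightarrow> bool" where
  "is_cover V E L H \<longleftrightarrow>
     (\<forall>x y. H x y \<longrightarrow> x \<in> cover_verts V L \<and> y \<in> cover_verts V L \<and> x \<noteq> y \<and> H y x) \<and>
     (\<forall>u\<in>V. \<forall>c\<in>L u. \<forall>c'\<in>L u. c \<noteq> c' \<longrightarrow> H (u, c) (u, c')) \<and>
     (\<forall>u v c c'. u \<noteq> v \<and> H (u, c) (v, c') \<longrightarrow> E u v) \<and>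
     (\<forall>u v c c1 c2. u \<noteq> v \<and> H (u, c) (v, c1) \<and> H (u, c) (v, c2) \<longrightarrow> c1 = c2)"

definition representative :: "'v set \<Rightarrow> ('v \<Rightarrow> nat set) \<Rightarrow> ('v \<times> nat) set \<Rightarrow> bool" where
  "representative V L R \<longleftrightarrow> R \<subseteq> cover_verts V L \<and> (\<forall>v\<in>V. \<exists>!c. (v, c) \<in> R)"

definition DP_colorable :: "'v set \<Rightarrow> ('v \<Rightarrow> 'v \<Rightarrow> bool) \<Rightarrow> nat \<Rightarrow> bool" where
  "DP_colorable V E k \<longleftrightarrow> (\<forall>L H. k_assignment V k L \<and> is_cover V E L H \<longrightarrow>
     (\<exists>R. representative V L R \<and> independent_on H R))"

definition DP_vertex_arborable :: "'v set \<Rightarrow> ('v \<Rightarrow> 'v \<Rightarrow> bool) \<Rightarrow> nat \<Rightarrow> bool" where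
  "DP_vertex_arborable V E k \<longleftrightarrow> (\<forall>L H. k_assignment V k L \<and> is_cover V E L H \<longrightarrow>
     (\<exists>R. representative V L R \<and> forest_on H R))"

definition choosable :: "'v set \<Rightarrow> ('v \<Rightarrow> 'v \<Rightarrow> bool) \<Rightarrow> nat \<Rightarrow> bool" where
  "choosable V E k \<longleftrightarrow> (\<forall>L. k_assignment V k L \<longrightarrow>
     (\<exists>c. (\<forall>v\<in>V. c v \<in> L v) \<and> (\<forall>u v. E u v \<longrightarrow> c u \<noteq> c v)))"

definition color_class :: "'v set \<Rightarrow> ('v \<Rightarrow> nat) \<Rightarrow> nat \<Rightarrow> 'v set" where
  "color_class V c i = {v \<in> V. c v = i}"

definition L_forested_coloring :: "'v set \<Rightarrow> ('v \<Rightarrow> 'v \<Rightarrow> bool) \<Rightarrow> ('v \<Rightarrow> nat set)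
    \<Rightarrow> ('v \<Rightarrow> nat) \<Rightarrow> bool" where
  "L_forested_coloring V E L c \<longleftrightarrow> (\<forall>v\<in>V. c v \<in> L v) \<and>
     (\<forall>i. forest_on E (color_class V c i))"

text \<open>F = (f_1,...,f_s) is represented by f :: nat => 'v => nat, f i = f_i for 1 <= i <= s.\<close>
definition DP_F_coloring :: "'v set \<Rightarrow> ('v \<Rightarrow> nat set) \<Rightarrow> ('v \<times> nat \<Rightarrow> 'v \<times> nat \<Rightarrow> bool)
    \<Rightarrow> (nat \<Rightarrow> 'v \<Rightarrow> nat) \<Rightarrow> ('v \<times> nat) set \<Rightarrow> bool" where
  "DP_F_coloring V L H f R \<longleftrightarrow> representative V L R \<and>
     (\<exists>xs. distinct xs \<and> set xs = R \<and>
        (\<forall>j < length xs. card {l. l < j \<and> H (xs ! l) (xs ! j)} < f (snd (xs ! j)) (fst (xs ! j))))"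

definition DPG_colorable :: "'v set \<Rightarrow> ('v \<Rightarrow> 'v \<Rightarrow> bool) \<Rightarrow> nat \<Rightarrow> nat \<Rightarrow> bool" where
  "DPG_colorable V E k t \<longleftrightarrow>
     (\<forall>s::nat. \<forall>H f. s \<ge> 1 \<and> is_cover V E (\<lambda>_. {1..s}) H \<and>
        (\<forall>v\<in>V. (\<Sum>i=1..s. f i v) \<ge> k) \<and> (\<forall>v\<in>V. \<forall>i\<in>{1..s}. f i v \<le> t) \<longrightarrow>
        (\<exists>R. DP_F_coloring V (\<lambda>_. {1..s}) H f R))"

end

theory Submission
  imports Defs
begin

text \<open>In an ordering of a representative set in which every vertex has fewer than \<open>f\<^sub>i(v) \<le> 2\<close>
  earlier neighbours, the last vertex of a cycle would have two earlier neighbours, so the set is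
  a forest; where \<open>f\<^sub>i(v) = 1\<close> the vertices have no earlier neighbours, so they are independent.
  Choosing \<open>f\<close> to be \<open>1\<close> on the lists gives DP-colourings, \<open>2\<close> on lists of size \<open>\<lceil>k/2\<rceil>\<close> gives
  DP-forested colourings, and \<open>1\<close> on the colours \<open>1..2d-k\<close> and \<open>2\<close> elsewhere gives the mixed
  colourings, applied to the cover in which \<open>(u,c)\<close> and \<open>(v,c)\<close> are adjacent along edges.
  Arbitrary lists are reduced to the lists \<open>{1..s}\<close> of the hypothesis by completing each fibre
  to a clique and giving weight \<open>0\<close> to the added colours.\<close>

definition back_degree :: "('a \<Rightarrow> 'a \<Rightarrow> bool) \<Rightarrow> 'a list \<Rightarrow> nat \<Rightarrow> nat" where
  "back_degree H xs j = card {l. l < j \<and> H (xs ! l) (xs ! j)}"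

lemma obtain_last_position:
  assumes "S \<subseteq> set xs" "S \<noteq> {}"
  obtains j where "j < length xs" "xs ! j \<in> S" "\<And>l. l < length xs \<Longrightarrow> xs ! l \<in> S \<Longrightarrow> l \<le> j"
proof -
  let ?P = "{l. l < length xs \<and> xs ! l \<in> S}"
  have "?P \<noteq> {}" using assms by (auto simp: in_set_conv_nth subset_iff)
  moreover have "finite ?P" by simp
  ultimately show ?thesis using that[of "Max ?P"] Max_in[of ?P] Max_ge[of ?P] by auto
qed

lemma neighbours_le_back_degree:
  assumes "S \<subseteq> set xs" and last: "\<And>l. l < length xs \<Longrightarrow> xs ! l \<in> S \<Longrightarrow> l \<le> j"
    and "\<not> H (xs ! j) (xs ! j)"
  shows "card {y \<in> S. H y (xs ! j)} \<le> back_degree H xs j"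
proof -
  let ?A = "{l. l < j \<and> H (xs ! l) (xs ! j)}"
  have "{y \<in> S. H y (xs ! j)} \<subseteq> (!) xs ` ?A"
  proof
    fix y assume y: "y \<in> {y \<in> S. H y (xs ! j)}"
    then obtain l where l: "l < length xs" "xs ! l = y"
      using assms(1) by (metis (mono_tags) in_set_conv_nth mem_Collect_eq subsetD)
    have "l \<le> j" using last l y by auto
    moreover have "l \<noteq> j" using l y assms(3) by auto
    ultimately show "y \<in> (!) xs ` ?A" using l y by auto
  qed
  then have "card {y \<in> S. H y (xs ! j)} \<le> card ((!) xs ` ?A)" by (intro card_mono) auto
  also have "\<dots> \<le> card ?A" by (intro card_image_le) simp
  finally show ?thesis unfolding back_degree_def .
qed

lemma independent_on_if_back_degree_zero:
  assumes "symp H" "irreflp H" "S \<subseteq> set xs"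
    and zero: "\<And>j. j < length xs \<Longrightarrow> xs ! j \<in> S \<Longrightarrow> back_degree H xs j = 0"
  shows "independent_on H S"
  unfolding independent_on_def
proof (intro ballI notI)
  fix x y assume xy: "x \<in> S" "y \<in> S" "H x y"
  then have "{x, y} \<subseteq> set xs" using assms(3) by auto
  then obtain j where j: "j < length xs" "xs ! j \<in> {x, y}"
    and last: "\<And>l. l < length xs \<Longrightarrow> xs ! l \<in> {x, y} \<Longrightarrow> l \<le> j"
    by (rule obtain_last_position) auto
  have irr: "\<not> H (xs ! j) (xs ! j)" using assms(2) by (simp add: irreflpD)
  have "{x, y} \<inter> {z. H z (xs ! j)} \<noteq> {}" using j(2) xy(3) assms(1) by (auto dest: sympD)
  then have "0 < card {z \<in> {x, y}. H z (xs ! j)}" by (auto simp: card_gt_0_iff)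
  also have "\<dots> \<le> back_degree H xs j"
    by (rule neighbours_le_back_degree[where S = "{x, y}"]) (use \<open>{x, y} \<subseteq> set xs\<close> last irr in auto)
  finally show False using zero j xy by auto
qed

lemma cycle_two_neighbours:
  assumes "symp H" "length cs \<ge> 3" "distinct cs"
    and cyc: "\<forall>i < length cs. H (cs ! i) (cs ! ((i + 1) mod length cs))" and p: "p < length cs"
  shows "2 \<le> card {y \<in> set cs. H y (cs ! p)}"
proof -
  let ?n = "length cs"
  define a where "a = (p + 1) mod ?n"
  define b where "b = (if p = 0 then ?n - 1 else p - 1)"
  have ab: "a < ?n" "b < ?n" "a \<noteq> b" "(b + 1) mod ?n = p"
    using assms(2) p by (auto simp: a_def b_def mod_Suc)
  have "H (cs ! a) (cs ! p)" using cyc p assms(1) by (auto simp: a_def dest: sympD)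
  moreover have "H (cs ! b) (cs ! p)" using cyc ab by metis
  ultimately have "{cs ! a, cs ! b} \<subseteq> {y \<in> set cs. H y (cs ! p)}" using ab by auto
  have "cs ! a \<noteq> cs ! b" using ab assms(3) by (simp add: nth_eq_iff_index_eq)
  with \<open>{cs ! a, cs ! b} \<subseteq> _\<close> have "card {cs ! a, cs ! b} \<le> card {y \<in> set cs. H y (cs ! p)}"
    by (intro card_mono) auto
  then show ?thesis using \<open>cs ! a \<noteq> cs ! b\<close> by simp
qed

lemma forest_on_if_back_degree_le_1:
  assumes "symp H" "irreflp H" "S \<subseteq> set xs"
    and le1: "\<And>j. j < length xs \<Longrightarrow> xs ! j \<in> S \<Longrightarrow> back_degree H xs j \<le> 1"
  shows "forest_on H S"
  unfolding forest_on_def has_cycle_in_def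
proof clarify
  fix cs assume cs: "3 \<le> length cs" "distinct cs" "set cs \<subseteq> S"
    "\<forall>i < length cs. H (cs ! i) (cs ! ((i + 1) mod length cs))"
  then have sub: "set cs \<subseteq> set xs" using assms(3) by auto
  then obtain j where j: "j < length xs" "xs ! j \<in> set cs"
    and last: "\<And>l. l < length xs \<Longrightarrow> xs ! l \<in> set cs \<Longrightarrow> l \<le> j"
    by (rule obtain_last_position) (use cs(1) in auto)
  obtain p where p: "p < length cs" "cs ! p = xs ! j" using j(2) by (auto simp: in_set_conv_nth)
  have "2 \<le> card {y \<in> set cs. H y (xs ! j)}"
    using cycle_two_neighbours[OF assms(1) cs(1,2,4) p(1)] p(2) by simp
  also have "\<dots> \<le> back_degree H xs j"
    by (rule neighbours_le_back_degree[where S = "set cs"]) (use sub last assms(2) in \<open>auto dest: irreflpD\<close>)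
  finally show False using le1 j cs(3) by force
qed

lemma is_cover_symp: "is_cover V E L H \<Longrightarrow> symp H"
  unfolding is_cover_def by (auto intro: sympI)

lemma is_cover_irreflp: "is_cover V E L H \<Longrightarrow> irreflp H"
  unfolding is_cover_def by (metis irreflpI)

lemma DP_F_coloring_independent_on:
  assumes "is_cover V E L H" "DP_F_coloring V L H f R" "S \<subseteq> R" "\<forall>(v, i) \<in> S. f i v \<le> 1"
  shows "independent_on H S"
proof -
  obtain xs where xs: "set xs = R" "\<forall>j < length xs. back_degree H xs j < f (snd (xs ! j)) (fst (xs ! j))"
    using assms(2) unfolding DP_F_coloring_def back_degree_def by blast
  show ?thesis
  proof (rule independent_on_if_back_degree_zero)
    fix j assume "j < length xs" "xs ! j \<in> S"
    then show "back_degree H xs j = 0" using xs(2) assms(4) by fastforce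
  qed (use assms(1,3) xs(1) is_cover_symp is_cover_irreflp in auto)
qed

lemma DP_F_coloring_forest_on:
  assumes "is_cover V E L H" "DP_F_coloring V L H f R" "S \<subseteq> R" "\<forall>(v, i) \<in> S. f i v \<le> 2"
  shows "forest_on H S"
proof -
  obtain xs where xs: "set xs = R" "\<forall>j < length xs. back_degree H xs j < f (snd (xs ! j)) (fst (xs ! j))"
    using assms(2) unfolding DP_F_coloring_def back_degree_def by blast
  show ?thesis
  proof (rule forest_on_if_back_degree_le_1)
    fix j assume "j < length xs" "xs ! j \<in> S"
    then show "back_degree H xs j \<le> 1" using xs(2) assms(4) by fastforce
  qed (use assms(1,3) xs(1) is_cover_symp is_cover_irreflp in auto)
qed

definition fibre_completion ::
    "'v set \<Rightarrow> ('v \<Rightarrow> nat set) \<Rightarrow> ('v \<times> nat \<Rightarrow> 'v \<times> nat \<Rightarrow> bool) \<Rightarrow> 'v \<times> nat \<Rightarrow> 'v \<times> nat \<Rightarrow> bool" where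
  "fibre_completion V M H x y \<longleftrightarrow> x \<in> cover_verts V M \<and> y \<in> cover_verts V M \<and>
     (H x y \<or> (fst x = fst y \<and> snd x \<noteq> snd y))"

lemma is_cover_fibre_completion:
  assumes "is_cover V E L H" "\<forall>v\<in>V. L v \<subseteq> M v"
  shows "is_cover V E M (fibre_completion V M H)"
proof -
  have "H x y \<Longrightarrow> x \<noteq> y \<and> H y x" for x y using assms(1) unfolding is_cover_def by blast
  moreover have "H (u, c) (v, c') \<Longrightarrow> u \<noteq> v \<Longrightarrow> E u v" for u v c c'
    using assms(1) unfolding is_cover_def by blast
  moreover have "H (u, c) (v, c1) \<Longrightarrow> H (u, c) (v, c2) \<Longrightarrow> u \<noteq> v \<Longrightarrow> c1 = c2" for u v c c1 c2
    using assms(1) unfolding is_cover_def by blast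
  ultimately show ?thesis unfolding is_cover_def fibre_completion_def by (auto simp: cover_verts_def)
qed

lemma fibre_completion_agrees:
  assumes "is_cover V E L H" "\<forall>v\<in>V. L v \<subseteq> M v" "x \<in> cover_verts V L" "y \<in> cover_verts V L"
  shows "fibre_completion V M H x y \<longleftrightarrow> H x y"
  using assms unfolding is_cover_def fibre_completion_def cover_verts_def by (cases x; cases y) auto

lemma DP_F_coloring_restrict:
  assumes "DP_F_coloring V M H' f R"
    and vanish: "\<forall>v\<in>V. \<forall>i. i \<notin> L v \<longrightarrow> f i v = 0"
    and agree: "\<And>x y. x \<in> cover_verts V L \<Longrightarrow> y \<in> cover_verts V L \<Longrightarrow> H' x y \<longleftrightarrow> H x y"
  shows "DP_F_coloring V L H f R"
proof -
  obtain xs where rep: "representative V M R" and xs: "distinct xs" "set xs = R"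
    and ord: "\<forall>j < length xs. card {l. l < j \<and> H' (xs ! l) (xs ! j)} < f (snd (xs ! j)) (fst (xs ! j))"
    using assms(1) unfolding DP_F_coloring_def by blast
  have RL: "R \<subseteq> cover_verts V L"
  proof
    fix x assume "x \<in> R"
    then obtain j where j: "j < length xs" "xs ! j = x" using xs(2) by (auto simp: in_set_conv_nth)
    have "fst x \<in> V" using \<open>x \<in> R\<close> rep unfolding representative_def cover_verts_def by auto
    moreover have "f (snd x) (fst x) \<noteq> 0" using ord j by fastforce
    ultimately show "x \<in> cover_verts V L" using vanish unfolding cover_verts_def by (cases x) force
  qed
  have "{l. l < j \<and> H' (xs ! l) (xs ! j)} = {l. l < j \<and> H (xs ! l) (xs ! j)}" if "j < length xs" for j
    using agree RL xs(2) that by (metis (lifting) nth_mem order.strict_trans subsetD)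
  then show ?thesis
    using rep RL xs ord unfolding DP_F_coloring_def representative_def by auto
qed

lemma DPG_colorable_DP_F_coloring:
  assumes "graph V E" "DPG_colorable V E k t" "is_cover V E L H"
    and L: "\<forall>v\<in>V. finite (L v) \<and> 0 \<notin> L v"
    and vanish: "\<forall>v\<in>V. \<forall>i. i \<notin> L v \<longrightarrow> f i v = 0"
    and bounded: "\<forall>v\<in>V. \<forall>i. f i v \<le> t" and large: "\<forall>v\<in>V. k \<le> (\<Sum>i\<in>L v. f i v)"
  shows "\<exists>R. DP_F_coloring V L H f R"
proof -
  define s where "s = Max (insert 1 (\<Union>v\<in>V. L v))"
  have fin: "finite (\<Union>v\<in>V. L v)" using assms(1) L unfolding graph_def by auto
  then have "1 \<le> s" unfolding s_def by simp
  have Ls: "\<forall>v\<in>V. L v \<subseteq> {1..s}"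
  proof (intro ballI subsetI)
    fix v c assume "v \<in> V" "c \<in> L v"
    then have "c \<le> s" "c \<noteq> 0" using fin L unfolding s_def by (auto intro: Max_ge) (metis neq0_conv)
    then show "c \<in> {1..s}" by simp
  qed
  have "\<forall>v\<in>V. k \<le> (\<Sum>i=1..s. f i v)"
  proof
    fix v assume "v \<in> V"
    then have "(\<Sum>i=1..s. f i v) = (\<Sum>i\<in>L v. f i v)"
      using Ls vanish by (intro sum.mono_neutral_right) auto
    then show "k \<le> (\<Sum>i=1..s. f i v)" using large \<open>v \<in> V\<close> by simp
  qed
  then obtain R where "DP_F_coloring V (\<lambda>_. {1..s}) (fibre_completion V (\<lambda>_. {1..s}) H) f R"
    using assms(2) \<open>1 \<le> s\<close> is_cover_fibre_completion[OF assms(3) Ls] bounded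
    unfolding DPG_colorable_def by blast
  then have "DP_F_coloring V L H f R"
    by (rule DP_F_coloring_restrict) (use vanish fibre_completion_agrees[OF assms(3) Ls] in auto)
  then show ?thesis ..
qed

definition list_cover :: "'v set \<Rightarrow> ('v \<Rightarrow> 'v \<Rightarrow> bool) \<Rightarrow> ('v \<Rightarrow> nat set) \<Rightarrow> 'v \<times> nat \<Rightarrow> 'v \<times> nat \<Rightarrow> bool" where
  "list_cover V E L x y \<longleftrightarrow> x \<in> cover_verts V L \<and> y \<in> cover_verts V L \<and>
     ((fst x = fst y \<and> snd x \<noteq> snd y) \<or> (E (fst x) (fst y) \<and> snd x = snd y))"

lemma is_cover_list_cover:
  assumes "graph V E" shows "is_cover V E L (list_cover V E L)"
  using assms unfolding graph_def is_cover_def list_cover_def cover_verts_def by auto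

definition rep_color :: "('v \<times> nat) set \<Rightarrow> 'v \<Rightarrow> nat" where
  "rep_color R v = (THE c. (v, c) \<in> R)"

lemma representative_rep_color:
  assumes "representative V L R" "v \<in> V"
  shows "(v, rep_color R v) \<in> R" "rep_color R v \<in> L v"
proof -
  have "\<exists>!c. (v, c) \<in> R" using assms unfolding representative_def by blast
  then show "(v, rep_color R v) \<in> R" unfolding rep_color_def by (rule theI')
  then show "rep_color R v \<in> L v" using assms unfolding representative_def cover_verts_def by blast
qed

lemma has_cycle_in_image:
  assumes "has_cycle_in A S" "inj_on g S" "\<forall>x\<in>S. \<forall>y\<in>S. A x y \<longrightarrow> B (g x) (g y)"
  shows "has_cycle_in B (g ` S)"
proof -
  obtain cs where cs: "length cs \<ge> 3" "distinct cs" "set cs \<subseteq> S"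
    "\<forall>i < length cs. A (cs ! i) (cs ! ((i + 1) mod length cs))"
    using assms(1) unfolding has_cycle_in_def by blast
  have next_lt: "(i + 1) mod length cs < length cs" for i using cs(1) by (intro mod_less_divisor) linarith
  have "distinct (map g cs)" using cs(2,3) assms(2) by (simp add: distinct_map inj_on_subset)
  moreover have "\<forall>i < length cs. B (map g cs ! i) (map g cs ! ((i + 1) mod length cs))"
    using cs(3,4) assms(3) next_lt by (simp del: mod_Suc) (meson nth_mem subsetD)
  ultimately show ?thesis using cs(1,3) unfolding has_cycle_in_def
    by (intro exI[of _ "map g cs"]) auto
qed

lemma independent_on_preimage:
  assumes "independent_on B (g ` S)" "\<forall>x\<in>S. \<forall>y\<in>S. A x y \<longrightarrow> B (g x) (g y)"
  shows "independent_on A S"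
  using assms unfolding independent_on_def by blast

lemma list_cover_color_class:
  assumes "graph V E" "representative V L R"
  shows "(\<lambda>v. (v, i)) ` color_class V (rep_color R) i \<subseteq> R"
    and "\<forall>u\<in>color_class V (rep_color R) i. \<forall>v\<in>color_class V (rep_color R) i.
           E u v \<longrightarrow> list_cover V E L (u, i) (v, i)"
  using assms representative_rep_color[OF assms(2)]
  unfolding color_class_def list_cover_def cover_verts_def graph_def by force+

lemma le_twice_ceiling_half: "k \<le> 2 * nat \<lceil>real k / 2\<rceil>"
proof -
  have "real k / 2 \<le> of_int \<lceil>real k / 2\<rceil>" by (rule le_of_int_ceiling)
  then show ?thesis by linarith
qed

lemma sum_one_two_weights_ge:
  assumes "finite A" "finite B" "card B \<le> 2 * card A - k" "k \<le> 2 * card A"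
  shows "k \<le> (\<Sum>i\<in>A. if i \<in> B then 1 else 2 :: nat)"
proof -
  have "(\<Sum>i\<in>A. if i \<in> B then 1 else 2 :: nat) = card (A \<inter> B) + 2 * card (A - B)"
    using assms(1) by (simp add: sum.If_cases Diff_eq)
  moreover have "card (A \<inter> B) + card (A - B) = card A" using assms(1) by (rule card_Int_Diff[symmetric])
  moreover have "card (A \<inter> B) \<le> card B" using assms(2) by (intro card_mono) auto
  ultimately show ?thesis using assms(3,4) by linarith
qed

lemma DPG_colorable_imp_DP_colorable:
  assumes "graph V E" "DPG_colorable V E k t" "1 \<le> t"
  shows "DP_colorable V E k"
  unfolding DP_colorable_def
proof (intro allI impI, elim conjE)
  fix L H assume L: "k_assignment V k L" and H: "is_cover V E L H"
  define f where "f i v = (if i \<in> L v then 1 else 0 :: nat)" for i v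
  have "\<exists>R. DP_F_coloring V L H f R"
    by (rule DPG_colorable_DP_F_coloring[OF assms(1,2) H])
      (use L assms(3) in \<open>auto simp: k_assignment_def f_def\<close>)
  then obtain R where R: "DP_F_coloring V L H f R" ..
  then have "independent_on H R"
    by (intro DP_F_coloring_independent_on[OF H R]) (auto simp: f_def)
  then show "\<exists>R. representative V L R \<and> independent_on H R"
    using R unfolding DP_F_coloring_def by blast
qed

lemma DP_colorable_imp_choosable:
  assumes "graph V E" "DP_colorable V E k"
  shows "choosable V E k"
  unfolding choosable_def
proof (intro allI impI)
  fix L assume "k_assignment V k L"
  then obtain R where R: "representative V L R" "independent_on (list_cover V E L) R"
    using assms is_cover_list_cover unfolding DP_colorable_def by blast
  have "rep_color R u \<noteq> rep_color R v" if "E u v" for u v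
  proof
    assume same: "rep_color R u = rep_color R v"
    have "u \<in> V" "v \<in> V" "u \<noteq> v" using that assms(1) unfolding graph_def by auto
    moreover have "rep_color R u \<in> L u" "rep_color R v \<in> L v"
      using representative_rep_color(2)[OF R(1)] \<open>u \<in> V\<close> \<open>v \<in> V\<close> by auto
    ultimately have "list_cover V E L (u, rep_color R u) (v, rep_color R v)"
      using that same by (simp add: list_cover_def cover_verts_def)
    then show False
      using R(2) representative_rep_color[OF R(1)] \<open>u \<in> V\<close> \<open>v \<in> V\<close> unfolding independent_on_def by blast
  qed
  then show "\<exists>c. (\<forall>v\<in>V. c v \<in> L v) \<and> (\<forall>u v. E u v \<longrightarrow> c u \<noteq> c v)"
    using representative_rep_color[OF R(1)] by blast
qed

lemma DPG_colorable_imp_DP_vertex_arborable: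
  assumes "graph V E" "DPG_colorable V E k t" "2 \<le> t"
  shows "DP_vertex_arborable V E (nat \<lceil>real k / 2\<rceil>)"
  unfolding DP_vertex_arborable_def
proof (intro allI impI, elim conjE)
  fix L H assume L: "k_assignment V (nat \<lceil>real k / 2\<rceil>) L" and H: "is_cover V E L H"
  define f where "f i v = (if i \<in> L v then 2 else 0 :: nat)" for i v
  have "\<exists>R. DP_F_coloring V L H f R"
    by (rule DPG_colorable_DP_F_coloring[OF assms(1,2) H])
      (use L assms(3) le_twice_ceiling_half[of k] in \<open>auto simp: k_assignment_def f_def\<close>)
  then obtain R where R: "DP_F_coloring V L H f R" ..
  then have "forest_on H R"
    by (intro DP_F_coloring_forest_on[OF H R]) (auto simp: f_def)
  then show "\<exists>R. representative V L R \<and> forest_on H R"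
    using R unfolding DP_F_coloring_def by blast
qed

lemma DPG_colorable_imp_forested_coloring:
  assumes "graph V E" "DPG_colorable V E k t" "2 \<le> t" "k \<le> 2 * d" "k_assignment V d L"
  shows "\<exists>c. L_forested_coloring V E L c \<and> (\<forall>i\<in>{1..2 * d - k}. independent_on E (color_class V c i))"
proof -
  define B where "B = {1..2 * d - k}"
  define f where "f i v = (if i \<in> L v then if i \<in> B then 1 else 2 else 0 :: nat)" for i v
  let ?H = "list_cover V E L"
  have H: "is_cover V E L ?H" using assms(1) by (rule is_cover_list_cover)
  have "\<exists>R. DP_F_coloring V L ?H f R"
  proof (rule DPG_colorable_DP_F_coloring[OF assms(1,2) H])
    show "\<forall>v\<in>V. k \<le> (\<Sum>i\<in>L v. f i v)"
    proof
      fix v assume "v \<in> V"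
      then have "finite (L v)" "card (L v) = d" using assms(5) unfolding k_assignment_def by auto
      moreover have "(\<Sum>i\<in>L v. f i v) = (\<Sum>i\<in>L v. if i \<in> B then 1 else 2)"
        unfolding f_def by (intro sum.cong) auto
      ultimately show "k \<le> (\<Sum>i\<in>L v. f i v)"
        using sum_one_two_weights_ge[of "L v" B k] assms(4) by (simp add: B_def)
    qed
  qed (use assms(3,5) in \<open>auto simp: k_assignment_def f_def\<close>)
  then obtain R where R: "DP_F_coloring V L ?H f R" ..
  then have rep: "representative V L R" unfolding DP_F_coloring_def by blast
  note class_in_R = list_cover_color_class(1)[OF assms(1) rep]
    and class_hom = list_cover_color_class(2)[OF assms(1) rep]
  have "forest_on E (color_class V (rep_color R) i)" for i
  proof -
    have "forest_on ?H ((\<lambda>v. (v, i)) ` color_class V (rep_color R) i)"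
      using DP_F_coloring_forest_on[OF H R class_in_R] by (auto simp: f_def)
    then show ?thesis
      using has_cycle_in_image[where g = "\<lambda>v. (v, i)", OF _ _ class_hom[of i]]
      unfolding forest_on_def by (auto simp: inj_on_def)
  qed
  then have "L_forested_coloring V E L (rep_color R)"
    using representative_rep_color(2)[OF rep] unfolding L_forested_coloring_def by blast
  moreover have "independent_on E (color_class V (rep_color R) i)" if "i \<in> B" for i
  proof (rule independent_on_preimage[where g = "\<lambda>v. (v, i)", OF _ class_hom[of i]])
    show "independent_on ?H ((\<lambda>v. (v, i)) ` color_class V (rep_color R) i)"
      using DP_F_coloring_independent_on[OF H R class_in_R] that by (auto simp: f_def)
  qed
  ultimately show ?thesis unfolding B_def by blast
qed

theorem lemma1:
  fixes V :: "'v set" and E :: "'v \<Rightarrow> 'v \<Rightarrow> bool" and k :: nat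
  assumes "k \<ge> 1" and "graph V E" and "DPG_colorable V E k 2"
  shows "DP_colorable V E k \<and> choosable V E k \<and>
         DP_vertex_arborable V E (nat \<lceil>real k / 2\<rceil>) \<and>
         (\<forall>d::nat. 2 * d > k \<and> d \<le> k \<longrightarrow>
            (\<forall>L. k_assignment V d L \<longrightarrow>
               (\<exists>c. L_forested_coloring V E L c \<and>
                    (\<forall>i\<in>{1..2 * d - k}. independent_on E (color_class V c i)))))"
proof -
  note G = assms(2) and D = assms(3)
  have DP: "DP_colorable V E k" by (rule DPG_colorable_imp_DP_colorable[OF G D]) simp
  moreover have "choosable V E k" using G DP by (rule DP_colorable_imp_choosable)
  moreover have "DP_vertex_arborable V E (nat \<lceil>real k / 2\<rceil>)"
    by (rule DPG_colorable_imp_DP_vertex_arborable[OF G D]) simp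
  moreover have "\<exists>c. L_forested_coloring V E L c \<and>
      (\<forall>i\<in>{1..2 * d - k}. independent_on E (color_class V c i))"
    if "k < 2 * d" "k_assignment V d L" for d L
    using DPG_colorable_imp_forested_coloring[OF G D _ _ that(2)] that(1) by simp
  ultimately show ?thesis by blast
qed

end
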